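(* Let $X\subseteq\mathbb R^n$ be nonempty, closed and convex, $F(x)=\mathsf E[\Phi(x,\xi)]$, with $F$ single-valued, Lipschitz continuous on $X$ with constant $L>0$ and strongly monotone on $X$ with constant $\eta>0$. Consider $x_{k+1}=\Pi_X(x_k-\gamma_k(F(x_k)+w_k))$, $w_k=\Phi(x_k,\xi_k)-F(x_k)$, $k\ge0$, where $x_0\in X$ is random, independent of the samples, with $\mathsf E\|x_0\|^2<\infty$; with $\mathcal F_k=\{x_0,\xi_0,\dots,\xi_{k-1}\}$, assume $\mathsf E[w_k\mid\mathcal F_k]=0$ and $\mathsf E[\|w_k\|^2\mid\mathcal F_k]\le\nu^2$ a.s. for all $k$, for a deterministic $\nu>0$. Let $c>0$, $0<\gamma_0<\frac1c$, and $\gamma_k=\gamma_{k-1}(1-c\gamma_{k-1})$ for $k\ge1$. Then $\{x_k\}$ converges almost surely to a random point belonging to the solution set of VI$(X,F)$ (which consists of its unique solution).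
   Context: VI$(X,F)$ asks for $x^*\in X$ with $(x-x^* )^TF(x^* )\ge0$ for all $x\in X$; $\Pi_X$ is the Euclidean projection onto $X$. Strong monotonicity: $(F(x)-F(y))^T(x-y)\ge\eta\|x-y\|^2$ for all $x,y\in X$. *)

theory Defs
  imports "HOL-Probability.Probability"
begin

definition VI_sol :: "('n::euclidean_space) set \<Rightarrow> ('n \<Rightarrow> 'n) \<Rightarrow> 'n set" where
  "VI_sol X F = {xs \<in> X. \<forall>x\<in>X. inner (x - xs) (F xs) \<ge> 0}"

definition nat_filt ::
  "'a measure \<Rightarrow> 'b measure \<Rightarrow> ('a \<Rightarrow> 'c::topological_space) \<Rightarrow> (nat \<Rightarrow> 'a \<Rightarrow> 'b) \<Rightarrow> nat \<Rightarrow> 'a measure" where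
  "nat_filt M S x0 xi k = sigma (space M)
     ({x0 -` A \<inter> space M | A. A \<in> sets borel} \<union>
      (\<Union>j<k. {xi j -` A \<inter> space M | A. A \<in> sets S}))"

end

theory Submission
  imports Defs
begin

text \<open>
  The variational inequality has a unique solution \<open>x\<^sup>*\<close>, the fixed point of the contraction
  \<open>y \<mapsto> \<Pi>\<^sub>X (y - (\<eta>/L\<^sup>2) F y)\<close>. Nonexpansiveness of \<open>\<Pi>\<^sub>X\<close> and strong monotonicity give, for
  \<open>V\<^sub>k = \<parallel>x\<^sub>k - x\<^sup>*\<parallel>\<^sup>2\<close>, the conditional bound
  \<open>E[V\<^sub>k\<^sub>+\<^sub>1 | \<F>\<^sub>k] \<le> (1 - 2\<gamma>\<^sub>k\<eta> + \<gamma>\<^sub>k\<^sup>2L\<^sup>2) V\<^sub>k + \<gamma>\<^sub>k\<^sup>2\<nu>\<^sup>2\<close>.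
  Since \<open>1/\<gamma>\<^sub>k\<close> grows linearly, \<open>\<gamma>\<^sub>k \<rightarrow> 0\<close> and \<open>\<Sum> \<gamma>\<^sub>k = \<infinity>\<close>, so \<open>E V\<^sub>k \<rightarrow> 0\<close>.
  The recursion \<open>\<gamma>\<^sub>k\<^sub>+\<^sub>1 = \<gamma>\<^sub>k - c\<gamma>\<^sub>k\<^sup>2\<close> makes \<open>W\<^sub>k = V\<^sub>k + \<nu>\<^sup>2\<gamma>\<^sub>k/c\<close> a nonnegative
  supermartingale from some index on, so Doob's maximal inequality bounds
  \<open>P(sup\<^sub>j\<^sub>\<ge>\<^sub>k V\<^sub>j \<ge> \<lambda>)\<close> by \<open>E W\<^sub>k / \<lambda> \<rightarrow> 0\<close>; hence \<open>x\<^sub>k \<rightarrow> x\<^sup>*\<close> almost surely.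
\<close>

section \<open>Step sizes\<close>

lemma stepsize_recursion_bounds:
  fixes \<gamma> :: "nat \<Rightarrow> real"
  assumes c: "c > 0" and \<gamma>0: "0 < \<gamma> 0" "\<gamma> 0 < 1 / c"
    and \<gamma>_Suc: "\<And>k. \<gamma> (Suc k) = \<gamma> k * (1 - c * \<gamma> k)"
  shows "0 < \<gamma> k" and "c * \<gamma> k < 1"
proof -
  have "0 < \<gamma> k \<and> \<gamma> k \<le> \<gamma> 0"
  proof (induction k)
    case 0
    then show ?case using \<gamma>0 by simp
  next
    case (Suc k)
    have "c * \<gamma> k \<le> c * \<gamma> 0" using Suc c by simp
    also have "\<dots> < 1" using \<gamma>0 c by (simp add: field_simps)
    finally have "0 < 1 - c * \<gamma> k" "1 - c * \<gamma> k \<le> 1" using Suc c by simp_all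
    then have "0 < \<gamma> (Suc k)" "\<gamma> (Suc k) \<le> \<gamma> k"
      using Suc \<gamma>_Suc[of k] by (simp_all add: mult_le_cancel_left1)
    then show ?case using Suc by simp
  qed
  moreover have "c * \<gamma> 0 < 1" using \<gamma>0 c by (simp add: field_simps)
  ultimately show "0 < \<gamma> k" "c * \<gamma> k < 1"
    using c by (auto intro: le_less_trans[OF mult_left_mono])
qed

lemma inverse_stepsize_recursion_bounds:
  fixes \<gamma> :: "nat \<Rightarrow> real"
  assumes c: "c > 0" and \<gamma>0: "0 < \<gamma> 0" "\<gamma> 0 < 1 / c"
    and \<gamma>_Suc: "\<And>k. \<gamma> (Suc k) = \<gamma> k * (1 - c * \<gamma> k)"
  shows "c * real k \<le> 1 / \<gamma> k" and "1 / \<gamma> k \<le> 1 / \<gamma> 0 + c / (1 - c * \<gamma> 0) * real k"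
proof -
  note bounds = stepsize_recursion_bounds[OF c \<gamma>0 \<gamma>_Suc]
  have increment: "1 / \<gamma> (Suc k) = 1 / \<gamma> k + c / (1 - c * \<gamma> k)" for k
    using bounds[of k] \<gamma>_Suc[of k] by (simp add: field_simps)
  have increment_lower: "c \<le> c / (1 - c * \<gamma> k)" for k
    using bounds[of k] c by (simp add: field_simps)
  have increment_upper: "c / (1 - c * \<gamma> k) \<le> c / (1 - c * \<gamma> 0)" for k
  proof -
    have "1 / \<gamma> 0 \<le> 1 / \<gamma> k"
    proof (induction k)
      case (Suc k)
      then show ?case using increment[of k] increment_lower[of k] c by linarith
    qed simp
    then have "c * \<gamma> k \<le> c * \<gamma> 0" using bounds(1)[of k] \<gamma>0 c by (simp add: field_simps)
    moreover have "0 < (1 - c * \<gamma> k) * (1 - c * \<gamma> 0)"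
      using bounds(2)[of k] bounds(2)[of 0] by simp
    ultimately show ?thesis using c by (intro divide_left_mono) auto
  qed
  show "c * real k \<le> 1 / \<gamma> k"
  proof (induction k)
    case (Suc k)
    then show ?case using increment[of k] increment_lower[of k] by (simp add: algebra_simps)
  qed (use \<gamma>0 in simp)
  show "1 / \<gamma> k \<le> 1 / \<gamma> 0 + c / (1 - c * \<gamma> 0) * real k"
  proof (induction k)
    case (Suc k)
    have "1 / \<gamma> (Suc k) \<le> (1 / \<gamma> 0 + c / (1 - c * \<gamma> 0) * real k) + c / (1 - c * \<gamma> 0)"
      using Suc increment[of k] increment_upper[of k] by linarith
    then show ?case by (simp add: distrib_left)
  qed simp
qed

lemma stepsize_recursion_tendsto_zero:
  fixes \<gamma> :: "nat \<Rightarrow> real"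
  assumes c: "c > 0" and \<gamma>0: "0 < \<gamma> 0" "\<gamma> 0 < 1 / c"
    and \<gamma>_Suc: "\<And>k. \<gamma> (Suc k) = \<gamma> k * (1 - c * \<gamma> k)"
  shows "\<gamma> \<longlonglongrightarrow> 0"
proof (rule tendsto_sandwich)
  show "\<forall>\<^sub>F k in sequentially. 0 \<le> \<gamma> k"
    using stepsize_recursion_bounds(1)[OF c \<gamma>0 \<gamma>_Suc] by (simp add: less_imp_le)
  show "\<forall>\<^sub>F k in sequentially. \<gamma> k \<le> (1 / c) / real k"
    unfolding eventually_sequentially
  proof (intro exI allI impI)
    fix k :: nat assume "1 \<le> k"
    then show "\<gamma> k \<le> (1 / c) / real k"
      using inverse_stepsize_recursion_bounds(1)[OF c \<gamma>0 \<gamma>_Suc, of k]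
        stepsize_recursion_bounds(1)[OF c \<gamma>0 \<gamma>_Suc, of k] c
      by (simp add: field_simps)
  qed
qed (use lim_const_over_n[of "1 / c"] in simp_all)

lemma stepsize_recursion_not_summable:
  fixes \<gamma> :: "nat \<Rightarrow> real"
  assumes c: "c > 0" and \<gamma>0: "0 < \<gamma> 0" "\<gamma> 0 < 1 / c"
    and \<gamma>_Suc: "\<And>k. \<gamma> (Suc k) = \<gamma> k * (1 - c * \<gamma> k)"
  shows "\<not> summable \<gamma>"
proof
  note bounds = stepsize_recursion_bounds[OF c \<gamma>0 \<gamma>_Suc]
  define E where "E = 1 / \<gamma> 0 + c / (1 - c * \<gamma> 0)"
  have "0 < 1 - c * \<gamma> 0" using bounds(2)[of 0] by simp
  then have E: "E > 0" using bounds(1)[of 0] c unfolding E_def by (intro add_pos_pos) auto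
  have "inverse (real (Suc k)) \<le> E * \<gamma> k" for k
  proof -
    have linear_le: "a + d * t \<le> (a + d) * (1 + t)" if "0 \<le> a" "0 \<le> d" "0 \<le> t" for a d t :: real
      using that by (simp add: ring_distribs)
    have "1 / \<gamma> k \<le> 1 / \<gamma> 0 + c / (1 - c * \<gamma> 0) * real k"
      by (rule inverse_stepsize_recursion_bounds(2)[OF c \<gamma>0 \<gamma>_Suc])
    also have "\<dots> \<le> E * real (Suc k)"
    proof -
      have "0 \<le> 1 / \<gamma> 0" "0 \<le> c / (1 - c * \<gamma> 0)"
        using bounds(1)[of 0] \<open>0 < 1 - c * \<gamma> 0\<close> c by simp_all
      then show ?thesis unfolding E_def of_nat_Suc by (rule linear_le) simp
    qed
    finally have "1 / \<gamma> k \<le> E * real (Suc k)" .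
    then have "1 \<le> \<gamma> k * (E * real (Suc k))" using bounds(1)[of k] by (simp add: field_simps)
    then show ?thesis using bounds(1)[of k] E by (simp add: field_simps)
  qed
  then have harmonic_le: "norm (inverse (real (Suc k))) \<le> E * \<gamma> k" for k by simp
  assume "summable \<gamma>"
  then have "summable (\<lambda>k. inverse (real (Suc k)))"
    by (intro summable_comparison_test'[OF summable_mult harmonic_le])
  then have "summable (\<lambda>k. inverse (real k))"
    by (rule summable_Suc_iff[THEN iffD1])
  then show False using not_summable_harmonic by blast
qed

section \<open>A deterministic recursion\<close>

lemma divergent_descent_reaches_sublevel:
  fixes u \<gamma> :: "nat \<Rightarrow> real"
  assumes u: "\<And>k. 0 \<le> u k" and \<gamma>: "\<And>k. 0 \<le> \<gamma> k" "\<not> summable \<gamma>" and \<delta>: "0 < \<delta>"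
    and descent: "\<And>k. N \<le> k \<Longrightarrow> a < u k \<Longrightarrow> u (Suc k) \<le> u k - \<delta> * \<gamma> k"
  shows "\<exists>m\<ge>N. u m \<le> a"
proof (rule ccontr)
  assume "\<not> ?thesis"
  then have above: "\<And>m. N \<le> m \<Longrightarrow> a < u m" using not_le by blast
  have total_descent: "u (j + N) \<le> u N - \<delta> * (\<Sum>i<j. \<gamma> (i + N))" for j
  proof (induction j)
    case (Suc j)
    then show ?case using descent[of "j + N"] above[of "j + N"] by (simp add: algebra_simps)
  qed simp
  have "\<delta> * (\<Sum>i<j. \<gamma> (i + N)) \<le> u N" for j
    using total_descent[of j] u[of "j + N"] by linarith
  then have "(\<Sum>i<j. \<gamma> (i + N)) \<le> u N / \<delta>" for j
    using \<delta> by (simp add: field_simps)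
  then have "summable (\<lambda>i. \<gamma> (i + N))" using \<gamma>(1) by (intro summableI_nonneg_bounded)
  then show False using \<gamma>(2) by simp
qed

lemma perturbed_contraction_tendsto_zero:
  fixes u \<gamma> :: "nat \<Rightarrow> real"
  assumes u: "\<And>k. 0 \<le> u k" and \<gamma>: "\<And>k. 0 < \<gamma> k" "\<gamma> \<longlonglongrightarrow> 0" "\<not> summable \<gamma>"
    and \<eta>: "0 < \<eta>" and b: "0 \<le> b"
    and recursion: "\<forall>\<^sub>F k in sequentially. u (Suc k) \<le> (1 - \<eta> * \<gamma> k) * u k + b * (\<gamma> k)\<^sup>2"
  shows "u \<longlonglongrightarrow> 0"
proof (rule tendstoI)
  fix r :: real assume r: "0 < r"
  define a where "a = r / 2"
  have a: "0 < a" using r by (simp add: a_def)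
  have "\<forall>\<^sub>F k in sequentially. \<gamma> k < min (1 / \<eta>) (\<eta> * a / (2 * b + 1))"
    using \<gamma>(2) \<eta> a b by (intro order_tendstoD) auto
  then have "\<forall>\<^sub>F k in sequentially. \<eta> * \<gamma> k \<le> 1 \<and> b * \<gamma> k \<le> \<eta> * a / 2"
  proof eventually_elim
    case (elim k)
    have "b * \<gamma> k \<le> (2 * b + 1) * \<gamma> k / 2" using \<gamma>(1)[of k] b by (simp add: field_simps)
    also have "\<dots> \<le> \<eta> * a / 2" using elim b by (simp add: field_simps)
    finally show ?case using elim \<eta> by (simp add: field_simps)
  qed
  from eventually_conj[OF recursion this] obtain N where N: "\<And>k. N \<le> k \<Longrightarrow>
      u (Suc k) \<le> (1 - \<eta> * \<gamma> k) * u k + b * (\<gamma> k)\<^sup>2 \<and> \<eta> * \<gamma> k \<le> 1 \<and> b * \<gamma> k \<le> \<eta> * a / 2"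
    unfolding eventually_sequentially by blast
  have step: "u (Suc k) \<le> u k - \<gamma> k * (\<eta> * u k - \<eta> * a / 2)" if "N \<le> k" for k
  proof -
    have "u (Suc k) \<le> u k - \<gamma> k * (\<eta> * u k - b * \<gamma> k)"
      using N[OF that] by (simp add: algebra_simps power2_eq_square)
    also have "\<dots> \<le> u k - \<gamma> k * (\<eta> * u k - \<eta> * a / 2)"
      using N[OF that] \<gamma>(1)[of k] by (intro diff_left_mono mult_left_mono) auto
    finally show ?thesis .
  qed
  have absorbing: "u (Suc k) \<le> a" if "N \<le> k" "u k \<le> a" for k
  proof -
    have "u (Suc k) \<le> (1 - \<eta> * \<gamma> k) * u k + \<gamma> k * (\<eta> * a / 2)"
      using step[OF that(1)] by (simp add: algebra_simps)
    also have "\<dots> \<le> (1 - \<eta> * \<gamma> k) * a + \<gamma> k * (\<eta> * a / 2)"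
      using N[OF that(1)] that(2) by (intro add_right_mono mult_left_mono) auto
    also have "\<dots> \<le> a" using \<gamma>(1)[of k] \<eta> a by (simp add: algebra_simps)
    finally show ?thesis .
  qed
  have descent: "u (Suc k) \<le> u k - \<eta> * a / 2 * \<gamma> k" if "N \<le> k" "a < u k" for k
  proof -
    have "\<eta> * a / 2 \<le> \<eta> * u k - \<eta> * a / 2" using that(2) \<eta> by simp
    then have "\<gamma> k * (\<eta> * a / 2) \<le> \<gamma> k * (\<eta> * u k - \<eta> * a / 2)"
      using \<gamma>(1)[of k] by (intro mult_left_mono) auto
    then show ?thesis using step[OF that(1)] by (simp add: algebra_simps)
  qed
  have "\<exists>m\<ge>N. u m \<le> a"
    by (rule divergent_descent_reaches_sublevel[where \<delta>="\<eta> * a / 2", OF u less_imp_le[OF \<gamma>(1)] \<gamma>(3)])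
       (use \<eta> a descent in auto)
  then obtain m where m: "N \<le> m" "u m \<le> a" by blast
  have stays: "u (j + m) \<le> a" for j
    by (induction j) (use m absorbing in auto)
  have "dist (u k) 0 < r" if "m \<le> k" for k
  proof -
    have "u k \<le> a" using stays[of "k - m"] that by simp
    then show ?thesis using u[of k] r unfolding a_def by simp
  qed
  then show "\<forall>\<^sub>F k in sequentially. dist (u k) 0 < r" unfolding eventually_sequentially by blast
qed

section \<open>Maximal inequality for nonnegative supermartingales\<close>

lemma integrable_indicator_mult_real:
  fixes f :: "'a \<Rightarrow> real"
  assumes "integrable M f" "B \<in> sets M"
  shows "integrable M (\<lambda>\<omega>. indicator B \<omega> * f \<omega>)"
  using integrable_real_mult_indicator[OF assms(2,1)] by (simp add: mult.commute)

lemma integral_indicator_space_mult: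
  fixes f :: "'a \<Rightarrow> real"
  shows "(\<integral>\<omega>. indicator (space M) \<omega> * f \<omega> \<partial>M) = (\<integral>\<omega>. f \<omega> \<partial>M)"
  by (rule Bochner_Integration.integral_cong) auto

text \<open>
  The supermartingale property is stated by integrating over the sets of \<open>G k\<close>; this is
  \<open>E[W (Suc k) | G k] \<le> W k\<close> without conditional expectations.
\<close>

locale nonneg_supermartingale = prob_space M for M :: "'a measure" +
  fixes G :: "nat \<Rightarrow> 'a measure" and W :: "nat \<Rightarrow> 'a \<Rightarrow> real"
  assumes subalgebra: "\<And>k. subalgebra M (G k)"
    and filtration: "\<And>k. sets (G k) \<subseteq> sets (G (Suc k))"
    and adapted: "\<And>k. W k \<in> borel_measurable (G k)"
    and nonneg: "\<And>k \<omega>. \<omega> \<in> space M \<Longrightarrow> 0 \<le> W k \<omega>"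
    and integrable: "\<And>k. integrable M (W k)"
    and supermartingale: "\<And>k B. B \<in> sets (G k) \<Longrightarrow>
      (\<integral>\<omega>. indicator B \<omega> * W (Suc k) \<omega> \<partial>M) \<le> (\<integral>\<omega>. indicator B \<omega> * W k \<omega> \<partial>M)"
begin

lemma borel_measurable_W [measurable]: "W k \<in> borel_measurable M"
  using measurable_from_subalg[OF subalgebra adapted] .

lemma integrable_indicator_mult_W: "B \<in> sets M \<Longrightarrow> integrable M (\<lambda>\<omega>. indicator B \<omega> * W k \<omega>)"
  by (rule integrable_indicator_mult_real[OF integrable])

lemma integral_indicator_split_at_level:
  assumes B: "B \<in> sets M"
  shows "l * measure M (B \<inter> {\<omega>\<in>space M. l \<le> W k \<omega>})
      + (\<integral>\<omega>. indicator (B \<inter> {\<omega>\<in>space M. W k \<omega> < l}) \<omega> * W k \<omega> \<partial>M)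
    \<le> (\<integral>\<omega>. indicator B \<omega> * W k \<omega> \<partial>M)"
proof -
  define U where "U = B \<inter> {\<omega>\<in>space M. l \<le> W k \<omega>}"
  define D where "D = B \<inter> {\<omega>\<in>space M. W k \<omega> < l}"
  have U: "U \<in> sets M" and D: "D \<in> sets M" unfolding U_def D_def using B by measurable
  have "l * measure M U = (\<integral>\<omega>. indicator U \<omega> * l \<partial>M)" using U by simp
  also have "\<dots> \<le> (\<integral>\<omega>. indicator U \<omega> * W k \<omega> \<partial>M)"
    using integrable_real_mult_indicator[OF U integrable_const[of l]]
    by (intro integral_mono integrable_indicator_mult_W U)
       (auto simp: U_def indicator_def mult.commute)
  finally have "l * measure M U + (\<integral>\<omega>. indicator D \<omega> * W k \<omega> \<partial>M)
      \<le> (\<integral>\<omega>. indicator U \<omega> * W k \<omega> + indicator D \<omega> * W k \<omega> \<partial>M)"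
    using integrable_indicator_mult_W[OF U] integrable_indicator_mult_W[OF D] by simp
  also have "\<dots> = (\<integral>\<omega>. indicator B \<omega> * W k \<omega> \<partial>M)"
    using sets.sets_into_space[OF B]
    by (intro Bochner_Integration.integral_cong) (auto simp: U_def D_def indicator_def)
  finally show ?thesis unfolding U_def D_def .
qed

definition stays_below :: "real \<Rightarrow> nat \<Rightarrow> 'a set" where
  "stays_below l m = {\<omega>\<in>space M. \<forall>k\<le>m. W k \<omega> < l}"

lemma stays_below_0: "stays_below l 0 = {\<omega>\<in>space M. W 0 \<omega> < l}"
  unfolding stays_below_def by auto

lemma stays_below_Suc: "stays_below l (Suc m) = stays_below l m \<inter> {\<omega>\<in>space M. W (Suc m) \<omega> < l}"
  unfolding stays_below_def by (auto simp: le_Suc_eq)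

lemma sublevel_in_filtration: "{\<omega>\<in>space M. W k \<omega> < l} \<in> sets (G k)"
proof -
  have "{\<omega>\<in>space (G k). W k \<omega> < l} \<in> sets (G k)" using adapted[of k] by measurable
  then show ?thesis using subalgebra[of k] by (simp add: subalgebra_def)
qed

lemma stays_below_in_filtration: "stays_below l m \<in> sets (G m)"
proof (induction m)
  case 0
  show ?case unfolding stays_below_0 by (rule sublevel_in_filtration)
next
  case (Suc m)
  show ?case unfolding stays_below_Suc using Suc filtration sublevel_in_filtration by blast
qed

lemma stays_below_in_sets: "stays_below l m \<in> sets M"
  using stays_below_in_filtration[of l m] subalgebra[of m] by (auto simp: subalgebra_def)

text \<open>Doob's argument: stop the first time \<open>W\<close> reaches level \<open>l\<close>.\<close>

lemma maximal_ineq_invariant: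
  "l * measure M (space M - stays_below l m) + (\<integral>\<omega>. indicator (stays_below l m) \<omega> * W m \<omega> \<partial>M)
    \<le> (\<integral>\<omega>. W 0 \<omega> \<partial>M)"
proof (induction m)
  case 0
  have "space M - stays_below l 0 = space M \<inter> {\<omega>\<in>space M. l \<le> W 0 \<omega>}"
    unfolding stays_below_def by auto
  then show ?case
    using integral_indicator_split_at_level[OF sets.top, of l 0]
    by (simp add: stays_below_0 integral_indicator_space_mult)
next
  case (Suc m)
  define U where "U = stays_below l m \<inter> {\<omega>\<in>space M. l \<le> W (Suc m) \<omega>}"
  have U: "U \<in> sets M" unfolding U_def using stays_below_in_sets by measurable
  have "space M - stays_below l (Suc m) = (space M - stays_below l m) \<union> U"
    and "(space M - stays_below l m) \<inter> U = {}"
    unfolding U_def stays_below_Suc using sets.sets_into_space[OF stays_below_in_sets] by auto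
  then have "measure M (space M - stays_below l (Suc m))
      = measure M (space M - stays_below l m) + measure M U"
    using U stays_below_in_sets by (simp add: finite_measure_Union)
  moreover have "l * measure M U + (\<integral>\<omega>. indicator (stays_below l (Suc m)) \<omega> * W (Suc m) \<omega> \<partial>M)
      \<le> (\<integral>\<omega>. indicator (stays_below l m) \<omega> * W m \<omega> \<partial>M)"
    using integral_indicator_split_at_level[OF stays_below_in_sets[of l m], where l=l and k="Suc m"]
      supermartingale[OF stays_below_in_filtration, of l m]
    unfolding U_def stays_below_Suc by linarith
  ultimately show ?case using Suc by (simp add: algebra_simps)
qed

lemma maximal_ineq:
  assumes l: "0 < l"
  shows "measure M {\<omega>\<in>space M. \<exists>k\<le>m. l \<le> W k \<omega>} \<le> (\<integral>\<omega>. W 0 \<omega> \<partial>M) / l"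
proof -
  have "{\<omega>\<in>space M. \<exists>k\<le>m. l \<le> W k \<omega>} = space M - stays_below l m"
    unfolding stays_below_def by (auto simp: not_less)
  moreover have "0 \<le> (\<integral>\<omega>. indicator (stays_below l m) \<omega> * W m \<omega> \<partial>M)"
    by (intro integral_nonneg_AE AE_I2) (simp add: nonneg)
  ultimately show ?thesis
    using maximal_ineq_invariant[of l m] l by (simp add: field_simps)
qed

lemma maximal_ineq_infinite:
  assumes l: "0 < l"
  shows "measure M {\<omega>\<in>space M. \<exists>k. l \<le> W k \<omega>} \<le> (\<integral>\<omega>. W 0 \<omega> \<partial>M) / l"
proof -
  define E where "E m = {\<omega>\<in>space M. \<exists>k\<le>m. l \<le> W k \<omega>}" for m
  have "(\<lambda>m. measure M (E m)) \<longlonglongrightarrow> measure M (\<Union>m. E m)"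
  proof (rule finite_Lim_measure_incseq)
    show "incseq E" by (rule monoI) (auto simp: E_def; meson order_trans)
  qed (auto simp: E_def)
  moreover have "(\<Union>m. E m) = {\<omega>\<in>space M. \<exists>k. l \<le> W k \<omega>}" unfolding E_def by auto
  ultimately show ?thesis
    using maximal_ineq[OF l] unfolding E_def by (auto intro: LIMSEQ_le_const2)
qed

end

section \<open>Variational inequalities and projections\<close>

lemma norm_diff_scaleR_squared:
  fixes a b :: "'v::real_inner"
  shows "(norm (a - g *\<^sub>R b))\<^sup>2 = (norm a)\<^sup>2 - 2 * g * inner a b + g\<^sup>2 * (norm b)\<^sup>2"
  unfolding power2_norm_eq_inner
  by (simp add: inner_diff_left inner_diff_right inner_commute algebra_simps power2_eq_square)

lemma strongly_monotone_forward_step_bound: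
  fixes F :: "'v::real_inner \<Rightarrow> 'v"
  assumes y: "y \<in> X" and z: "z \<in> X" and g: "0 \<le> g"
    and Lip: "\<forall>y\<in>X. \<forall>z\<in>X. norm (F y - F z) \<le> L * norm (y - z)"
    and smono: "\<forall>y\<in>X. \<forall>z\<in>X. inner (F y - F z) (y - z) \<ge> \<eta> * (norm (y - z))\<^sup>2"
  shows "(norm (y - z - g *\<^sub>R (F y - F z)))\<^sup>2 \<le> (1 - 2 * g * \<eta> + g\<^sup>2 * L\<^sup>2) * (norm (y - z))\<^sup>2"
proof -
  have monotone: "\<eta> * (norm (y - z))\<^sup>2 \<le> inner (y - z) (F y - F z)"
    using smono y z by (simp add: inner_commute)
  have "norm (F y - F z) \<le> L * norm (y - z)" using Lip y z by blast
  then have lipschitz: "(norm (F y - F z))\<^sup>2 \<le> L\<^sup>2 * (norm (y - z))\<^sup>2"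
    by (metis norm_ge_zero power_mono power_mult_distrib)
  have "(norm (y - z - g *\<^sub>R (F y - F z)))\<^sup>2
      = (norm (y - z))\<^sup>2 - 2 * g * inner (y - z) (F y - F z) + g\<^sup>2 * (norm (F y - F z))\<^sup>2"
    by (rule norm_diff_scaleR_squared)
  also have "\<dots> \<le> (norm (y - z))\<^sup>2 - 2 * g * (\<eta> * (norm (y - z))\<^sup>2) + g\<^sup>2 * (L\<^sup>2 * (norm (y - z))\<^sup>2)"
    using monotone lipschitz g by (intro add_mono diff_mono mult_left_mono) auto
  also have "\<dots> = (1 - 2 * g * \<eta> + g\<^sup>2 * L\<^sup>2) * (norm (y - z))\<^sup>2" by (simp add: algebra_simps)
  finally show ?thesis .
qed

lemma closest_point_eq_iff_inner_le:
  fixes a z :: "'v::euclidean_space"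
  assumes S: "convex S" "closed S" and z: "z \<in> S"
  shows "closest_point S a = z \<longleftrightarrow> (\<forall>y\<in>S. inner (a - z) (y - z) \<le> 0)"
proof
  assume "closest_point S a = z"
  then show "\<forall>y\<in>S. inner (a - z) (y - z) \<le> 0" using closest_point_dot[OF S] by blast
next
  assume obtuse: "\<forall>y\<in>S. inner (a - z) (y - z) \<le> 0"
  have "dist a z \<le> dist a y" if y: "y \<in> S" for y
  proof -
    have "a - z - 1 *\<^sub>R (y - z) = a - y" by simp
    then have "(norm (a - y))\<^sup>2 = (norm (a - z))\<^sup>2 - 2 * inner (a - z) (y - z) + (norm (y - z))\<^sup>2"
      using norm_diff_scaleR_squared[of "a - z" 1 "y - z"] by simp
    moreover have "inner (a - z) (y - z) \<le> 0" using obtuse y by blast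
    ultimately have "(norm (a - z))\<^sup>2 \<le> (norm (a - y))\<^sup>2"
      using zero_le_power2[of "norm (y - z)"] by linarith
    then show ?thesis unfolding dist_norm by (rule power2_le_imp_le) simp
  qed
  then show "closest_point S a = z" using closest_point_unique[OF S z] by simp
qed

lemma VI_sol_iff_projection_fixpoint:
  fixes F :: "'v::euclidean_space \<Rightarrow> 'v"
  assumes X: "convex X" "closed X" and g: "0 < g"
  shows "s \<in> VI_sol X F \<longleftrightarrow> s \<in> X \<and> closest_point X (s - g *\<^sub>R F s) = s"
proof (cases "s \<in> X")
  case True
  have "inner ((s - g *\<^sub>R F s) - s) (y - s) \<le> 0 \<longleftrightarrow> 0 \<le> inner (y - s) (F s)" for y
    using g by (simp add: inner_commute zero_le_mult_iff)
  then have "closest_point X (s - g *\<^sub>R F s) = s \<longleftrightarrow> (\<forall>y\<in>X. 0 \<le> inner (y - s) (F s))"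
    using closest_point_eq_iff_inner_le[OF X True] by simp
  then show ?thesis using True unfolding VI_sol_def by simp
qed (simp add: VI_sol_def)

lemma strongly_monotone_VI_sol_unique:
  fixes F :: "'v::euclidean_space \<Rightarrow> 'v"
  assumes smono: "0 < \<eta>" "\<forall>y\<in>X. \<forall>z\<in>X. inner (F y - F z) (y - z) \<ge> \<eta> * (norm (y - z))\<^sup>2"
    and s: "s \<in> VI_sol X F" and t: "t \<in> VI_sol X F"
  shows "s = t"
proof -
  have X: "s \<in> X" "t \<in> X" and "0 \<le> inner (t - s) (F s)" "0 \<le> inner (s - t) (F t)"
    using s t unfolding VI_sol_def by auto
  moreover have "inner (F s - F t) (s - t) = - inner (t - s) (F s) - inner (s - t) (F t)"
    by (simp add: inner_diff_left inner_diff_right inner_commute)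
  moreover have "\<eta> * (norm (s - t))\<^sup>2 \<le> inner (F s - F t) (s - t)" using smono(2) X by blast
  ultimately have "\<eta> * (norm (s - t))\<^sup>2 \<le> 0" by linarith
  then show "s = t" using smono(1) by (simp add: mult_le_0_iff)
qed

text \<open>
  The step \<open>\<eta>/L\<^sup>2\<close> minimises \<open>1 - 2\<tau>\<eta> + \<tau>\<^sup>2L\<^sup>2\<close>. The \<open>max\<close> is needed only when
  \<open>\<eta> > L\<close>, which forces \<open>X\<close> to be a singleton.
\<close>

lemma forward_backward_map_contraction:
  fixes F :: "'v::euclidean_space \<Rightarrow> 'v"
  assumes X: "X \<noteq> {}" "closed X" "convex X"
    and Lip: "0 < L" "\<forall>y\<in>X. \<forall>z\<in>X. norm (F y - F z) \<le> L * norm (y - z)"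
    and smono: "0 < \<eta>" "\<forall>y\<in>X. \<forall>z\<in>X. inner (F y - F z) (y - z) \<ge> \<eta> * (norm (y - z))\<^sup>2"
    and y: "y \<in> X" and z: "z \<in> X"
  shows "dist (closest_point X (y - (\<eta> / L\<^sup>2) *\<^sub>R F y)) (closest_point X (z - (\<eta> / L\<^sup>2) *\<^sub>R F z))
    \<le> sqrt (max 0 (1 - \<eta>\<^sup>2 / L\<^sup>2)) * dist y z"
proof -
  let ?\<tau> = "\<eta> / L\<^sup>2"
  have "dist (closest_point X (y - ?\<tau> *\<^sub>R F y)) (closest_point X (z - ?\<tau> *\<^sub>R F z))
      \<le> dist (y - ?\<tau> *\<^sub>R F y) (z - ?\<tau> *\<^sub>R F z)"
    by (rule closest_point_lipschitz[OF X(3,2,1)])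
  also have "\<dots> = norm (y - z - ?\<tau> *\<^sub>R (F y - F z))"
    by (simp add: dist_norm scaleR_diff_right algebra_simps)
  also have "\<dots> \<le> sqrt (max 0 (1 - \<eta>\<^sup>2 / L\<^sup>2)) * dist y z"
  proof (rule power2_le_imp_le)
    have "(norm (y - z - ?\<tau> *\<^sub>R (F y - F z)))\<^sup>2 \<le> (1 - 2 * ?\<tau> * \<eta> + ?\<tau>\<^sup>2 * L\<^sup>2) * (norm (y - z))\<^sup>2"
      by (rule strongly_monotone_forward_step_bound[OF y z _ Lip(2) smono(2)]) (use Lip(1) smono(1) in simp)
    also have "1 - 2 * ?\<tau> * \<eta> + ?\<tau>\<^sup>2 * L\<^sup>2 = 1 - \<eta>\<^sup>2 / L\<^sup>2"
      using Lip(1) by (simp add: field_simps power2_eq_square)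
    also have "(1 - \<eta>\<^sup>2 / L\<^sup>2) * (norm (y - z))\<^sup>2 \<le> max 0 (1 - \<eta>\<^sup>2 / L\<^sup>2) * (norm (y - z))\<^sup>2"
      by (intro mult_right_mono) auto
    also have "\<dots> = (sqrt (max 0 (1 - \<eta>\<^sup>2 / L\<^sup>2)) * dist y z)\<^sup>2"
      by (simp add: power_mult_distrib dist_norm)
    finally show "(norm (y - z - ?\<tau> *\<^sub>R (F y - F z)))\<^sup>2 \<le> (sqrt (max 0 (1 - \<eta>\<^sup>2 / L\<^sup>2)) * dist y z)\<^sup>2" .
  qed simp
  finally show ?thesis .
qed

lemma strongly_monotone_VI_sol_singleton:
  fixes F :: "'v::euclidean_space \<Rightarrow> 'v"
  assumes X: "X \<noteq> {}" "closed X" "convex X"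
    and Lip: "0 < L" "\<forall>y\<in>X. \<forall>z\<in>X. norm (F y - F z) \<le> L * norm (y - z)"
    and smono: "0 < \<eta>" "\<forall>y\<in>X. \<forall>z\<in>X. inner (F y - F z) (y - z) \<ge> \<eta> * (norm (y - z))\<^sup>2"
  shows "\<exists>s. VI_sol X F = {s}"
proof -
  have "\<exists>!s\<in>X. closest_point X (s - (\<eta> / L\<^sup>2) *\<^sub>R F s) = s"
  proof (rule Banach_fix)
    show "Topological_Spaces.complete X" using X(2) by (simp add: complete_eq_closed)
    show "sqrt (max 0 (1 - \<eta>\<^sup>2 / L\<^sup>2)) < 1" using Lip(1) smono(1) by (simp add: max_def)
    show "(\<lambda>y. closest_point X (y - (\<eta> / L\<^sup>2) *\<^sub>R F y)) ` X \<subseteq> X"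
      using closest_point_in_set[OF X(2,1)] by blast
  qed (use X forward_backward_map_contraction[OF X Lip smono] in auto)
  then obtain s where "s \<in> X" "closest_point X (s - (\<eta> / L\<^sup>2) *\<^sub>R F s) = s" by blast
  then have "s \<in> VI_sol X F"
    using VI_sol_iff_projection_fixpoint[OF X(3,2), of "\<eta> / L\<^sup>2"] Lip(1) smono(1) by simp
  then have "VI_sol X F = {s}" using strongly_monotone_VI_sol_unique[OF smono] by blast
  then show ?thesis ..
qed

lemma projected_step_bound:
  fixes F :: "'v::euclidean_space \<Rightarrow> 'v"
  assumes X: "X \<noteq> {}" "closed X" "convex X" and y: "y \<in> X" and s: "s \<in> VI_sol X F" and g: "0 < g"
    and Lip: "\<forall>y\<in>X. \<forall>z\<in>X. norm (F y - F z) \<le> L * norm (y - z)"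
    and smono: "\<forall>y\<in>X. \<forall>z\<in>X. inner (F y - F z) (y - z) \<ge> \<eta> * (norm (y - z))\<^sup>2"
  shows "(norm (closest_point X (y - g *\<^sub>R (F y + v)) - s))\<^sup>2
    \<le> (1 - 2 * g * \<eta> + g\<^sup>2 * L\<^sup>2) * (norm (y - s))\<^sup>2
      - 2 * g * inner (y - s - g *\<^sub>R (F y - F s)) v + g\<^sup>2 * (norm v)\<^sup>2"
proof -
  have sX: "s \<in> X" and s_fix: "closest_point X (s - g *\<^sub>R F s) = s"
    using s VI_sol_iff_projection_fixpoint[OF X(3,2) g] by auto
  have "norm (closest_point X (y - g *\<^sub>R (F y + v)) - s)
      = dist (closest_point X (y - g *\<^sub>R (F y + v))) (closest_point X (s - g *\<^sub>R F s))"
    by (simp add: s_fix dist_norm)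
  also have "\<dots> \<le> dist (y - g *\<^sub>R (F y + v)) (s - g *\<^sub>R F s)"
    by (rule closest_point_lipschitz[OF X(3,2,1)])
  also have "\<dots> = norm ((y - s - g *\<^sub>R (F y - F s)) - g *\<^sub>R v)"
    by (simp add: dist_norm algebra_simps)
  finally have "(norm (closest_point X (y - g *\<^sub>R (F y + v)) - s))\<^sup>2
      \<le> (norm ((y - s - g *\<^sub>R (F y - F s)) - g *\<^sub>R v))\<^sup>2"
    by (simp add: power_mono)
  also have "\<dots> = (norm (y - s - g *\<^sub>R (F y - F s)))\<^sup>2
      - 2 * g * inner (y - s - g *\<^sub>R (F y - F s)) v + g\<^sup>2 * (norm v)\<^sup>2"
    by (rule norm_diff_scaleR_squared)
  also have "\<dots> \<le> (1 - 2 * g * \<eta> + g\<^sup>2 * L\<^sup>2) * (norm (y - s))\<^sup>2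
      - 2 * g * inner (y - s - g *\<^sub>R (F y - F s)) v + g\<^sup>2 * (norm v)\<^sup>2"
    using strongly_monotone_forward_step_bound[OF y sX _ Lip smono] g by simp
  finally show ?thesis .
qed

section \<open>The projected stochastic approximation scheme\<close>

locale sample_filtration = prob_space M for M :: "'a measure" +
  fixes S :: "'b measure" and x0 :: "'a \<Rightarrow> 'c::topological_space" and \<xi>s :: "nat \<Rightarrow> 'a \<Rightarrow> 'b"
  assumes x0_measurable: "x0 \<in> borel_measurable M"
    and \<xi>s_measurable: "\<And>k. \<xi>s k \<in> measurable M S"
begin

abbreviation \<F> :: "nat \<Rightarrow> 'a measure" where "\<F> k \<equiv> nat_filt M S x0 \<xi>s k"

definition generators :: "nat \<Rightarrow> 'a set set" where
  "generators k = {x0 -` A \<inter> space M | A. A \<in> sets borel} \<union> (\<Union>j<k. {\<xi>s j -` A \<inter> space M | A. A \<in> sets S})"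

lemma generators_subset_sets: "generators k \<subseteq> sets M"
  unfolding generators_def using measurable_sets[OF x0_measurable] measurable_sets[OF \<xi>s_measurable] by blast

lemma space_nat_filt [simp]: "space (\<F> k) = space M"
  unfolding nat_filt_def generators_def[symmetric]
  using generators_subset_sets sets.sets_into_space by (intro space_measure_of) blast

lemma sets_nat_filt: "sets (\<F> k) = sigma_sets (space M) (generators k)"
  unfolding nat_filt_def generators_def[symmetric]
  using generators_subset_sets sets.sets_into_space by (intro sets_measure_of) blast

lemma nat_filt_subalgebra: "subalgebra M (\<F> k)"
  unfolding subalgebra_def sets_nat_filt
  using sets.sigma_sets_subset[OF generators_subset_sets] by simp

lemma sets_nat_filt_mono: "k \<le> m \<Longrightarrow> sets (\<F> k) \<subseteq> sets (\<F> m)"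
  unfolding sets_nat_filt generators_def by (intro sigma_sets_mono' Un_mono order.refl UN_mono) auto

lemma sets_nat_filt_imp_sets: "B \<in> sets (\<F> k) \<Longrightarrow> B \<in> sets M"
  using nat_filt_subalgebra by (auto simp: subalgebra_def)

lemma measurable_nat_filt_mono: "f \<in> measurable (\<F> k) N \<Longrightarrow> k \<le> m \<Longrightarrow> f \<in> measurable (\<F> m) N"
  by (rule measurable_from_subalg[of "\<F> m" "\<F> k"]) (auto simp: subalgebra_def sets_nat_filt_mono)

lemma measurable_nat_filt_imp_measurable: "f \<in> measurable (\<F> k) N \<Longrightarrow> f \<in> measurable M N"
  by (rule measurable_from_subalg[OF nat_filt_subalgebra])

lemma x0_measurable_nat_filt: "x0 \<in> borel_measurable (\<F> k)"
proof (rule measurableI)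
  fix A :: "'c set" assume "A \<in> sets borel"
  then have "x0 -` A \<inter> space M \<in> generators k" unfolding generators_def by blast
  then show "x0 -` A \<inter> space (\<F> k) \<in> sets (\<F> k)" unfolding sets_nat_filt by auto
qed simp

lemma \<xi>s_measurable_nat_filt: "j < k \<Longrightarrow> \<xi>s j \<in> measurable (\<F> k) S"
proof (rule measurableI)
  fix A assume "j < k" "A \<in> sets S"
  then have "\<xi>s j -` A \<inter> space M \<in> generators k" unfolding generators_def by blast
  then show "\<xi>s j -` A \<inter> space (\<F> k) \<in> sets (\<F> k)" unfolding sets_nat_filt by auto
qed (use measurable_space[OF \<xi>s_measurable] in simp)

lemma sigma_finite_subalgebra_nat_filt: "sigma_finite_subalgebra M (\<F> k)"
proof -
  interpret finite_measure_subalgebra M "\<F> k"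
    by unfold_locales (rule nat_filt_subalgebra)
  show ?thesis by unfold_locales
qed

end

lemma borel_measurable_vec_nth [measurable (raw)]:
  fixes f :: "'a \<Rightarrow> real ^ 'n"
  shows "f \<in> borel_measurable M \<Longrightarrow> (\<lambda>\<omega>. f \<omega> $ i) \<in> borel_measurable M"
  by (erule measurable_compose[OF _ borel_measurable_continuous_onI[OF linear_continuous_on[OF bounded_linear_vec_nth]]])

locale projected_stochastic_approximation = sample_filtration M S x0 \<xi>s
  for M :: "'a measure" and S :: "'b measure" and x0 :: "'a \<Rightarrow> real ^ 'n" and \<xi>s :: "nat \<Rightarrow> 'a \<Rightarrow> 'b" +
  fixes X :: "(real ^ 'n) set" and F :: "real ^ 'n \<Rightarrow> real ^ 'n"
    and \<Phi> :: "real ^ 'n \<Rightarrow> 'b \<Rightarrow> real ^ 'n"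
    and x w :: "nat \<Rightarrow> 'a \<Rightarrow> real ^ 'n"
    and \<gamma> :: "nat \<Rightarrow> real" and L \<eta> \<nu> c :: real
  assumes X: "X \<noteq> {}" "closed X" "convex X"
    and \<Phi>_measurable: "(\<lambda>(y, s). \<Phi> y s) \<in> borel_measurable (borel \<Otimes>\<^sub>M S)"
    and Lip: "L > 0" "\<forall>y\<in>X. \<forall>z\<in>X. norm (F y - F z) \<le> L * norm (y - z)"
    and smono: "\<eta> > 0" "\<forall>y\<in>X. \<forall>z\<in>X. inner (F y - F z) (y - z) \<ge> \<eta> * (norm (y - z))\<^sup>2"
    and x0_X: "\<And>\<omega>. \<omega> \<in> space M \<Longrightarrow> x0 \<omega> \<in> X"
    and x0_sq: "integrable M (\<lambda>\<omega>. (norm (x0 \<omega>))\<^sup>2)"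
    and x_0: "\<And>\<omega>. x 0 \<omega> = x0 \<omega>"
    and x_Suc: "\<And>k \<omega>. x (Suc k) \<omega> = closest_point X (x k \<omega> - \<gamma> k *\<^sub>R (F (x k \<omega>) + w k \<omega>))"
    and w_def: "\<And>k \<omega>. w k \<omega> = \<Phi> (x k \<omega>) (\<xi>s k \<omega>) - F (x k \<omega>)"
    and w_mean: "\<And>k i. AE \<omega> in M. real_cond_exp M (\<F> k) (\<lambda>\<omega>. w k \<omega> $ i) \<omega> = 0"
    and w_var: "\<nu> > 0" "\<And>k. AE \<omega> in M.
                 nn_cond_exp M (\<F> k) (\<lambda>\<omega>. ennreal ((norm (w k \<omega>))\<^sup>2)) \<omega> \<le> ennreal (\<nu>\<^sup>2)"
    and c: "c > 0"
    and \<gamma>0: "0 < \<gamma> 0" "\<gamma> 0 < 1 / c"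
    and \<gamma>_Suc: "\<And>k. \<gamma> (Suc k) = \<gamma> k * (1 - c * \<gamma> k)"
begin

lemma \<gamma>_pos: "0 < \<gamma> k"
  using stepsize_recursion_bounds(1)[OF c \<gamma>0 \<gamma>_Suc] .

lemma x_in_X: "\<omega> \<in> space M \<Longrightarrow> x k \<omega> \<in> X"
  by (cases k) (auto simp: x_0 x0_X x_Suc closest_point_in_set X)

lemma \<Phi>_measurable_nat_filt:
  "f \<in> borel_measurable (\<F> (Suc k)) \<Longrightarrow> (\<lambda>\<omega>. \<Phi> (f \<omega>) (\<xi>s k \<omega>)) \<in> borel_measurable (\<F> (Suc k))"
  using measurable_compose[OF measurable_Pair[OF _ \<xi>s_measurable_nat_filt[OF lessI]] \<Phi>_measurable]
  by simp

lemma x_measurable_nat_filt: "x k \<in> borel_measurable (\<F> k)"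
proof (induction k)
  case 0
  show ?case using x0_measurable_nat_filt by (simp add: x_0[abs_def])
next
  case (Suc k)
  have x_k: "x k \<in> borel_measurable (\<F> (Suc k))" using measurable_nat_filt_mono[OF Suc] by simp
  have "closest_point X \<in> borel_measurable borel"
    by (intro borel_measurable_continuous_onI continuous_on_closest_point X)
  then have "(\<lambda>\<omega>. closest_point X (x k \<omega> - \<gamma> k *\<^sub>R \<Phi> (x k \<omega>) (\<xi>s k \<omega>))) \<in> borel_measurable (\<F> (Suc k))"
    using x_k \<Phi>_measurable_nat_filt[OF x_k] by measurable
  then show ?case by (simp add: x_Suc[abs_def] w_def)
qed

lemma F_x_measurable_nat_filt: "(\<lambda>\<omega>. F (x k \<omega>)) \<in> borel_measurable (\<F> k)"
proof -
  have "continuous_on X F"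
    using Lip by (intro lipschitz_on_continuous_on[of L] lipschitz_onI) (auto simp: dist_norm)
  then have "continuous_on UNIV (F \<circ> closest_point X)"
    using closest_point_in_set[OF X(2,1)]
    by (intro continuous_on_compose continuous_on_closest_point X) (auto elim: continuous_on_subset)
  then have "(\<lambda>\<omega>. (F \<circ> closest_point X) (x k \<omega>)) \<in> borel_measurable (\<F> k)"
    using measurable_compose[OF x_measurable_nat_filt borel_measurable_continuous_onI] by blast
  then show ?thesis
    by (rule measurable_cong[THEN iffD1, rotated]) (simp add: closest_point_self x_in_X)
qed

lemma w_measurable_nat_filt: "w k \<in> borel_measurable (\<F> (Suc k))"
proof -
  have "x k \<in> borel_measurable (\<F> (Suc k))" "(\<lambda>\<omega>. F (x k \<omega>)) \<in> borel_measurable (\<F> (Suc k))"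
    using measurable_nat_filt_mono[OF x_measurable_nat_filt] measurable_nat_filt_mono[OF F_x_measurable_nat_filt]
    by auto
  then show ?thesis unfolding w_def[abs_def] using \<Phi>_measurable_nat_filt by measurable
qed

lemma w_measurable [measurable]: "w k \<in> borel_measurable M"
  using measurable_nat_filt_imp_measurable w_measurable_nat_filt by blast

definition sol :: "real ^ 'n" where "sol = (SOME s. VI_sol X F = {s})"

lemma VI_sol_eq: "VI_sol X F = {sol}"
  unfolding sol_def by (rule someI_ex[OF strongly_monotone_VI_sol_singleton[OF X Lip smono]])

lemma sol_in_X: "sol \<in> X"
  using VI_sol_eq unfolding VI_sol_def by auto

definition V :: "nat \<Rightarrow> 'a \<Rightarrow> real" where "V k \<omega> = (norm (x k \<omega> - sol))\<^sup>2"

text \<open>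
  Before projection the step error is \<open>a k - \<gamma> k w k\<close>, where \<open>a k\<close> is \<open>\<F> k\<close>-measurable
  and \<open>w k\<close> has conditional mean zero.
\<close>

definition a :: "nat \<Rightarrow> 'a \<Rightarrow> real ^ 'n" where "a k \<omega> = x k \<omega> - sol - \<gamma> k *\<^sub>R (F (x k \<omega>) - F sol)"

definition q :: "nat \<Rightarrow> real" where "q k = 1 - 2 * \<gamma> k * \<eta> + (\<gamma> k)\<^sup>2 * L\<^sup>2"

lemma V_nonneg: "0 \<le> V k \<omega>"
  by (simp add: V_def)

lemma V_measurable_nat_filt: "V k \<in> borel_measurable (\<F> k)"
  unfolding V_def[abs_def] using x_measurable_nat_filt[of k] by measurable

lemma a_measurable_nat_filt: "a k \<in> borel_measurable (\<F> k)"
  unfolding a_def[abs_def] using x_measurable_nat_filt[of k] F_x_measurable_nat_filt[of k] by measurable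

lemma V_measurable [measurable]: "V k \<in> borel_measurable M"
  and a_measurable [measurable]: "a k \<in> borel_measurable M"
  using measurable_nat_filt_imp_measurable V_measurable_nat_filt a_measurable_nat_filt by blast+

lemma norm_a_squared_le: "\<omega> \<in> space M \<Longrightarrow> (norm (a k \<omega>))\<^sup>2 \<le> q k * V k \<omega>"
  unfolding a_def V_def q_def
  by (rule strongly_monotone_forward_step_bound[OF x_in_X sol_in_X less_imp_le[OF \<gamma>_pos] Lip(2) smono(2)])

lemma V_Suc_le:
  "\<omega> \<in> space M \<Longrightarrow>
    V (Suc k) \<omega> \<le> q k * V k \<omega> - 2 * \<gamma> k * inner (a k \<omega>) (w k \<omega>) + (\<gamma> k)\<^sup>2 * (norm (w k \<omega>))\<^sup>2"
  unfolding V_def q_def a_def x_Suc[of k]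
  using VI_sol_eq by (intro projected_step_bound[OF X x_in_X _ \<gamma>_pos Lip(2) smono(2)]) auto

lemma noise_second_moment:
  assumes B: "B \<in> sets (\<F> k)"
  shows "integrable M (\<lambda>\<omega>. indicator B \<omega> * (norm (w k \<omega>))\<^sup>2)"
    and "(\<integral>\<omega>. indicator B \<omega> * (norm (w k \<omega>))\<^sup>2 \<partial>M) \<le> \<nu>\<^sup>2 * measure M B"
proof -
  interpret sigma_finite_subalgebra M "\<F> k" by (rule sigma_finite_subalgebra_nat_filt)
  have BM [measurable]: "B \<in> sets M" using sets_nat_filt_imp_sets[OF B] .
  define g where "g \<omega> = ennreal ((norm (w k \<omega>))\<^sup>2)" for \<omega>
  have "(\<integral>\<^sup>+\<omega>. indicator B \<omega> * g \<omega> \<partial>M) = (\<integral>\<^sup>+\<omega>. indicator B \<omega> * nn_cond_exp M (\<F> k) g \<omega> \<partial>M)"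
    using B by (intro nn_cond_exp_intg[symmetric]) (auto simp: g_def)
  also have "\<dots> \<le> (\<integral>\<^sup>+\<omega>. ennreal (\<nu>\<^sup>2) * indicator B \<omega> \<partial>M)"
    using w_var(2)[of k] unfolding g_def[symmetric]
    by (intro nn_integral_mono_AE) (auto elim!: eventually_mono simp: indicator_def)
  also have "\<dots> = ennreal (\<nu>\<^sup>2) * emeasure M B"
    using BM by (rule nn_integral_cmult_indicator)
  also have "\<dots> = ennreal (\<nu>\<^sup>2 * measure M B)"
    by (simp add: emeasure_eq_measure ennreal_mult)
  finally have "(\<integral>\<^sup>+\<omega>. indicator B \<omega> * g \<omega> \<partial>M) \<le> ennreal (\<nu>\<^sup>2 * measure M B)" .
  moreover have "ennreal (indicator B \<omega> * (norm (w k \<omega>))\<^sup>2) = indicator B \<omega> * g \<omega>" for \<omega>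
    by (simp add: g_def indicator_def)
  ultimately have bound: "(\<integral>\<^sup>+\<omega>. ennreal (indicator B \<omega> * (norm (w k \<omega>))\<^sup>2) \<partial>M) \<le> ennreal (\<nu>\<^sup>2 * measure M B)"
    by simp
  show integrable: "integrable M (\<lambda>\<omega>. indicator B \<omega> * (norm (w k \<omega>))\<^sup>2)"
    using bound by (intro integrableI_nonneg) (auto simp: top.not_eq_extremum order_le_less_trans)
  show "(\<integral>\<omega>. indicator B \<omega> * (norm (w k \<omega>))\<^sup>2 \<partial>M) \<le> \<nu>\<^sup>2 * measure M B"
    using bound nn_integral_eq_integral[OF integrable] by (simp add: ennreal_le_iff)
qed

lemma cross_term_vanishes:
  assumes B: "B \<in> sets (\<F> k)" and V_k: "integrable M (V k)"
  shows "integrable M (\<lambda>\<omega>. indicator B \<omega> * inner (a k \<omega>) (w k \<omega>))"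
    and "(\<integral>\<omega>. indicator B \<omega> * inner (a k \<omega>) (w k \<omega>) \<partial>M) = 0"
proof -
  interpret sigma_finite_subalgebra M "\<F> k" by (rule sigma_finite_subalgebra_nat_filt)
  have BM [measurable]: "B \<in> sets M" using sets_nat_filt_imp_sets[OF B] .
  have "integrable M (\<lambda>\<omega>. (norm (w k \<omega>))\<^sup>2)
      \<longleftrightarrow> integrable M (\<lambda>\<omega>. indicator (space M) \<omega> * (norm (w k \<omega>))\<^sup>2)"
    by (rule Bochner_Integration.integrable_cong) auto
  then have "integrable M (\<lambda>\<omega>. (norm (w k \<omega>))\<^sup>2)"
    using noise_second_moment(1)[OF sets.top] by simp
  moreover have "integrable M (\<lambda>\<omega>. (norm (a k \<omega>))\<^sup>2)"
  proof (rule Bochner_Integration.integrable_bound)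
    show "integrable M (\<lambda>\<omega>. q k * V k \<omega>)" using V_k by simp
    show "AE \<omega> in M. norm ((norm (a k \<omega>))\<^sup>2) \<le> norm (q k * V k \<omega>)"
      using norm_a_squared_le by (intro AE_I2) (simp add: order_trans[OF _ abs_ge_self])
  qed simp
  ultimately have dominating: "integrable M (\<lambda>\<omega>. (norm (a k \<omega>))\<^sup>2 + (norm (w k \<omega>))\<^sup>2)" by simp
  define h where "h i \<omega> = (indicator B \<omega> * a k \<omega> $ i) * w k \<omega> $ i" for i \<omega>
  have h_integrable: "integrable M (h i)" for i
  proof (rule Bochner_Integration.integrable_bound[OF dominating])
    show "h i \<in> borel_measurable M" unfolding h_def[abs_def] by measurable
    have "\<bar>a k \<omega> $ i\<bar> * \<bar>w k \<omega> $ i\<bar> \<le> (norm (a k \<omega>))\<^sup>2 + (norm (w k \<omega>))\<^sup>2" for \<omega>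
    proof -
      have "\<bar>a k \<omega> $ i\<bar> * \<bar>w k \<omega> $ i\<bar> \<le> norm (a k \<omega>) * norm (w k \<omega>)"
        by (intro mult_mono component_le_norm_cart) auto
      also have "\<dots> \<le> (norm (a k \<omega>))\<^sup>2 + (norm (w k \<omega>))\<^sup>2"
        using sum_squares_bound[of "norm (a k \<omega>)" "norm (w k \<omega>)"]
          mult_nonneg_nonneg[OF norm_ge_zero norm_ge_zero, of "a k \<omega>" "w k \<omega>"] by linarith
      finally show ?thesis .
    qed
    then have "norm (h i \<omega>) \<le> norm ((norm (a k \<omega>))\<^sup>2 + (norm (w k \<omega>))\<^sup>2)" for \<omega>
      unfolding h_def by (cases "\<omega> \<in> B") (simp_all add: abs_mult)
    then show "AE \<omega> in M. norm (h i \<omega>) \<le> norm ((norm (a k \<omega>))\<^sup>2 + (norm (w k \<omega>))\<^sup>2)"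
      by simp
  qed
  have h_integral: "(\<integral>\<omega>. h i \<omega> \<partial>M) = 0" for i
  proof -
    have "(\<lambda>\<omega>. indicator B \<omega> * a k \<omega> $ i) \<in> borel_measurable (\<F> k)"
      using B a_measurable_nat_filt[of k] by measurable
    then have "(\<integral>\<omega>. h i \<omega> \<partial>M)
        = (\<integral>\<omega>. (indicator B \<omega> * a k \<omega> $ i) * real_cond_exp M (\<F> k) (\<lambda>\<omega>. w k \<omega> $ i) \<omega> \<partial>M)"
      using real_cond_exp_intg(2)[OF h_integrable[unfolded h_def]] unfolding h_def by simp
    also have "\<dots> = (\<integral>\<omega>. 0 \<partial>M)"
      using w_mean[of k i] by (intro integral_cong_AE) (auto elim!: eventually_mono)
    also have "\<dots> = 0" by simp
    finally show ?thesis .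
  qed
  have sum_h: "indicator B \<omega> * inner (a k \<omega>) (w k \<omega>) = (\<Sum>i\<in>UNIV. h i \<omega>)" for \<omega>
    unfolding h_def inner_vec_def by (simp add: sum_distrib_left mult.assoc)
  show "integrable M (\<lambda>\<omega>. indicator B \<omega> * inner (a k \<omega>) (w k \<omega>))"
    unfolding sum_h using h_integrable by (rule Bochner_Integration.integrable_sum)
  show "(\<integral>\<omega>. indicator B \<omega> * inner (a k \<omega>) (w k \<omega>) \<partial>M) = 0"
    unfolding sum_h using h_integrable h_integral by (simp add: Bochner_Integration.integral_sum)
qed

lemma lyapunov_step:
  assumes B: "B \<in> sets (\<F> k)" and V_k: "integrable M (V k)"
  shows "integrable M (V (Suc k))"
    and "(\<integral>\<omega>. indicator B \<omega> * V (Suc k) \<omega> \<partial>M)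
      \<le> q k * (\<integral>\<omega>. indicator B \<omega> * V k \<omega> \<partial>M) + (\<gamma> k)\<^sup>2 * \<nu>\<^sup>2 * measure M B"
proof -
  define R where "R C \<omega> = q k * (indicator C \<omega> * V k \<omega>)
      - 2 * \<gamma> k * (indicator C \<omega> * inner (a k \<omega>) (w k \<omega>)) + (\<gamma> k)\<^sup>2 * (indicator C \<omega> * (norm (w k \<omega>))\<^sup>2)"
    for C \<omega>
  have R_integrable: "integrable M (R C)" if "C \<in> sets (\<F> k)" for C
    unfolding R_def[abs_def]
    using integrable_indicator_mult_real[OF V_k sets_nat_filt_imp_sets[OF that]]
      cross_term_vanishes(1)[OF that V_k] noise_second_moment(1)[OF that]
    by simp
  have R_bound: "indicator C \<omega> * V (Suc k) \<omega> \<le> R C \<omega>" if "\<omega> \<in> space M" for C \<omega>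
    using V_Suc_le[OF that] unfolding R_def by (cases "\<omega> \<in> C") (auto simp: algebra_simps)
  have space_in: "space M \<in> sets (\<F> k)" using sets.top[of "\<F> k"] by simp
  show V_Suc: "integrable M (V (Suc k))"
  proof (rule Bochner_Integration.integrable_bound[OF R_integrable[OF space_in]])
    show "AE \<omega> in M. norm (V (Suc k) \<omega>) \<le> norm (R (space M) \<omega>)"
      using R_bound[of _ "space M"] V_nonneg by (intro AE_I2) force
  qed simp
  have "(\<integral>\<omega>. indicator B \<omega> * V (Suc k) \<omega> \<partial>M) \<le> (\<integral>\<omega>. R B \<omega> \<partial>M)"
    using integrable_indicator_mult_real[OF V_Suc sets_nat_filt_imp_sets[OF B]] R_integrable[OF B] R_bound
    by (intro integral_mono) auto
  also have "\<dots> = q k * (\<integral>\<omega>. indicator B \<omega> * V k \<omega> \<partial>M)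
      - 2 * \<gamma> k * (\<integral>\<omega>. indicator B \<omega> * inner (a k \<omega>) (w k \<omega>) \<partial>M)
      + (\<gamma> k)\<^sup>2 * (\<integral>\<omega>. indicator B \<omega> * (norm (w k \<omega>))\<^sup>2 \<partial>M)"
    unfolding R_def
    using integrable_indicator_mult_real[OF V_k sets_nat_filt_imp_sets[OF B]]
      cross_term_vanishes(1)[OF B V_k] noise_second_moment(1)[OF B]
    by simp
  also have "\<dots> \<le> q k * (\<integral>\<omega>. indicator B \<omega> * V k \<omega> \<partial>M) + (\<gamma> k)\<^sup>2 * (\<nu>\<^sup>2 * measure M B)"
    using cross_term_vanishes(2)[OF B V_k] noise_second_moment(2)[OF B] by (simp add: mult_left_mono)
  finally show "(\<integral>\<omega>. indicator B \<omega> * V (Suc k) \<omega> \<partial>M)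
      \<le> q k * (\<integral>\<omega>. indicator B \<omega> * V k \<omega> \<partial>M) + (\<gamma> k)\<^sup>2 * \<nu>\<^sup>2 * measure M B"
    by (simp add: mult.assoc)
qed

lemma V_integrable: "integrable M (V k)"
proof (induction k)
  case 0
  have "integrable M (\<lambda>\<omega>. 2 * (norm (x0 \<omega>))\<^sup>2 + 2 * (norm sol)\<^sup>2)" using x0_sq by simp
  then show ?case
  proof (rule Bochner_Integration.integrable_bound)
    show "AE \<omega> in M. norm (V 0 \<omega>) \<le> norm (2 * (norm (x0 \<omega>))\<^sup>2 + 2 * (norm sol)\<^sup>2)"
    proof (rule AE_I2)
      fix \<omega>
      have "norm (x0 \<omega> - sol) \<le> norm (x0 \<omega>) + norm sol" by (rule norm_triangle_ineq4)
      then have "(norm (x0 \<omega> - sol))\<^sup>2 \<le> (norm (x0 \<omega>) + norm sol)\<^sup>2" by (simp add: power_mono)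
      also have "\<dots> \<le> 2 * (norm (x0 \<omega>))\<^sup>2 + 2 * (norm sol)\<^sup>2"
        using sum_squares_bound[of "norm (x0 \<omega>)" "norm sol"] by (simp add: power2_sum)
      finally show "norm (V 0 \<omega>) \<le> norm (2 * (norm (x0 \<omega>))\<^sup>2 + 2 * (norm sol)\<^sup>2)"
        by (simp add: V_def x_0)
    qed
  qed simp
next
  case (Suc k)
  show ?case using lyapunov_step(1)[OF sets.top Suc] .
qed

lemma q_eventually_le: "\<forall>\<^sub>F k in sequentially. q k \<le> 1 - \<eta> * \<gamma> k"
proof -
  have "\<forall>\<^sub>F k in sequentially. \<gamma> k < \<eta> / L\<^sup>2"
    using stepsize_recursion_tendsto_zero[OF c \<gamma>0 \<gamma>_Suc] Lip(1) smono(1) by (intro order_tendstoD) auto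
  then show ?thesis
  proof eventually_elim
    case (elim k)
    then have "\<gamma> k * L\<^sup>2 \<le> \<eta>" using Lip(1) by (simp add: field_simps)
    then have "\<gamma> k * (\<gamma> k * L\<^sup>2) \<le> \<gamma> k * \<eta>"
      using \<gamma>_pos[of k] by (intro mult_left_mono) auto
    then show ?case unfolding q_def by (simp add: power2_eq_square algebra_simps)
  qed
qed

lemma expected_V_tendsto_zero: "(\<lambda>k. \<integral>\<omega>. V k \<omega> \<partial>M) \<longlonglongrightarrow> 0"
proof (rule perturbed_contraction_tendsto_zero)
  show "\<And>k. 0 \<le> (\<integral>\<omega>. V k \<omega> \<partial>M)" by (simp add: V_nonneg)
  show "\<And>k. 0 < \<gamma> k" by (rule \<gamma>_pos)
  show "\<gamma> \<longlonglongrightarrow> 0" by (rule stepsize_recursion_tendsto_zero[OF c \<gamma>0 \<gamma>_Suc])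
  show "\<not> summable \<gamma>" by (rule stepsize_recursion_not_summable[OF c \<gamma>0 \<gamma>_Suc])
  show "\<forall>\<^sub>F k in sequentially. (\<integral>\<omega>. V (Suc k) \<omega> \<partial>M)
      \<le> (1 - \<eta> * \<gamma> k) * (\<integral>\<omega>. V k \<omega> \<partial>M) + \<nu>\<^sup>2 * (\<gamma> k)\<^sup>2"
    using q_eventually_le
  proof eventually_elim
    case (elim k)
    have "(\<integral>\<omega>. V (Suc k) \<omega> \<partial>M) \<le> q k * (\<integral>\<omega>. V k \<omega> \<partial>M) + (\<gamma> k)\<^sup>2 * \<nu>\<^sup>2"
      using lyapunov_step(2)[OF sets.top V_integrable] by (simp add: integral_indicator_space_mult prob_space)
    also have "q k * (\<integral>\<omega>. V k \<omega> \<partial>M) \<le> (1 - \<eta> * \<gamma> k) * (\<integral>\<omega>. V k \<omega> \<partial>M)"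
      using elim by (intro mult_right_mono) (simp_all add: V_nonneg)
    finally show ?case by (simp add: algebra_simps)
  qed
qed (use smono(1) in simp_all)

text \<open>
  Since \<open>\<gamma> (Suc k) = \<gamma> k - c \<gamma> k\<^sup>2\<close>, the correction \<open>\<nu>\<^sup>2 \<gamma> k / c\<close> decreases by exactly
  \<open>\<nu>\<^sup>2 \<gamma> k\<^sup>2\<close>, the noise contribution in \<open>lyapunov_step\<close>.
\<close>

definition W :: "nat \<Rightarrow> 'a \<Rightarrow> real" where "W k \<omega> = V k \<omega> + \<nu>\<^sup>2 * \<gamma> k / c"

lemma W_nonneg: "0 \<le> W k \<omega>"
  unfolding W_def using V_nonneg[of k \<omega>] \<gamma>_pos[of k] c by simp

lemma V_le_W: "V k \<omega> \<le> W k \<omega>"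
  unfolding W_def using \<gamma>_pos[of k] c by simp

lemma W_measurable [measurable]: "W k \<in> borel_measurable M"
  unfolding W_def[abs_def] by measurable

lemma W_integrable: "integrable M (W k)"
  unfolding W_def[abs_def] using V_integrable by simp

lemma integral_indicator_W:
  "B \<in> sets M \<Longrightarrow> (\<integral>\<omega>. indicator B \<omega> * W k \<omega> \<partial>M)
    = (\<integral>\<omega>. indicator B \<omega> * V k \<omega> \<partial>M) + \<nu>\<^sup>2 * \<gamma> k / c * measure M B"
  unfolding W_def distrib_left
  using integrable_indicator_mult_real[OF V_integrable] integrable_indicator_mult_real[OF integrable_const]
  by (simp add: mult.commute)

lemma W_supermartingale_step:
  assumes q: "q k \<le> 1" and B: "B \<in> sets (\<F> k)"
  shows "(\<integral>\<omega>. indicator B \<omega> * W (Suc k) \<omega> \<partial>M) \<le> (\<integral>\<omega>. indicator B \<omega> * W k \<omega> \<partial>M)"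
proof -
  have "0 \<le> (\<integral>\<omega>. indicator B \<omega> * V k \<omega> \<partial>M)"
    by (intro integral_nonneg_AE AE_I2) (simp add: V_nonneg)
  then have "q k * (\<integral>\<omega>. indicator B \<omega> * V k \<omega> \<partial>M) \<le> (\<integral>\<omega>. indicator B \<omega> * V k \<omega> \<partial>M)"
    using mult_right_mono[OF q] by simp
  then have "(\<integral>\<omega>. indicator B \<omega> * V (Suc k) \<omega> \<partial>M)
      \<le> (\<integral>\<omega>. indicator B \<omega> * V k \<omega> \<partial>M) + (\<gamma> k)\<^sup>2 * \<nu>\<^sup>2 * measure M B"
    using lyapunov_step(2)[OF B V_integrable] by linarith
  moreover have "\<nu>\<^sup>2 * \<gamma> (Suc k) / c * measure M B
      = \<nu>\<^sup>2 * \<gamma> k / c * measure M B - (\<gamma> k)\<^sup>2 * \<nu>\<^sup>2 * measure M B"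
    unfolding \<gamma>_Suc using c by (simp add: field_simps power2_eq_square)
  ultimately show ?thesis
    unfolding integral_indicator_W[OF sets_nat_filt_imp_sets[OF B]] by linarith
qed

lemma W_shifted_nonneg_supermartingale:
  assumes "\<And>j. n \<le> j \<Longrightarrow> q j \<le> 1"
  shows "nonneg_supermartingale M (\<lambda>j. \<F> (n + j)) (\<lambda>j. W (n + j))"
proof unfold_locales
  fix j B \<omega>
  show "subalgebra M (\<F> (n + j))" by (rule nat_filt_subalgebra)
  show "sets (\<F> (n + j)) \<subseteq> sets (\<F> (n + Suc j))" by (rule sets_nat_filt_mono) simp
  show "W (n + j) \<in> borel_measurable (\<F> (n + j))"
    unfolding W_def[abs_def] using V_measurable_nat_filt by measurable
  show "0 \<le> W (n + j) \<omega>" by (rule W_nonneg)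
  show "integrable M (W (n + j))" by (rule W_integrable)
  show "B \<in> sets (\<F> (n + j)) \<Longrightarrow>
      (\<integral>\<omega>. indicator B \<omega> * W (n + Suc j) \<omega> \<partial>M) \<le> (\<integral>\<omega>. indicator B \<omega> * W (n + j) \<omega> \<partial>M)"
    using W_supermartingale_step[OF assms[of "n + j"]] by (simp only: add_Suc_right le_add1 simp_thms)
qed

lemma expected_W_tendsto_zero: "(\<lambda>k. \<integral>\<omega>. W k \<omega> \<partial>M) \<longlonglongrightarrow> 0"
proof -
  have "(\<lambda>k. (\<integral>\<omega>. V k \<omega> \<partial>M) + \<nu>\<^sup>2 * \<gamma> k / c) \<longlonglongrightarrow> 0 + \<nu>\<^sup>2 * 0 / c"
    by (intro tendsto_add tendsto_divide tendsto_mult tendsto_const expected_V_tendsto_zero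
        stepsize_recursion_tendsto_zero[OF c \<gamma>0 \<gamma>_Suc]) (use c in simp)
  then show ?thesis unfolding W_def[abs_def] using V_integrable c by (simp add: prob_space)
qed

lemma measure_V_frequently_ge_le:
  assumes l: "0 < l" and q: "\<And>j. n \<le> j \<Longrightarrow> q j \<le> 1"
  shows "measure M {\<omega>\<in>space M. \<forall>m. \<exists>k\<ge>m. l \<le> V k \<omega>} \<le> (\<integral>\<omega>. W n \<omega> \<partial>M) / l"
proof -
  have "{\<omega>\<in>space M. \<forall>m. \<exists>k\<ge>m. l \<le> V k \<omega>} \<subseteq> {\<omega>\<in>space M. \<exists>j. l \<le> W (n + j) \<omega>}"
  proof safe
    fix \<omega> assume "\<omega> \<in> space M" "\<forall>m. \<exists>k\<ge>m. l \<le> V k \<omega>"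
    then obtain k where "n \<le> k" "l \<le> V k \<omega>" by blast
    then have "l \<le> W (n + (k - n)) \<omega>" using V_le_W[of k \<omega>] by simp
    then show "\<exists>j. l \<le> W (n + j) \<omega>" ..
  qed
  then have "measure M {\<omega>\<in>space M. \<forall>m. \<exists>k\<ge>m. l \<le> V k \<omega>}
      \<le> measure M {\<omega>\<in>space M. \<exists>j. l \<le> W (n + j) \<omega>}"
    by (intro finite_measure_mono) measurable
  also have "\<dots> \<le> (\<integral>\<omega>. W n \<omega> \<partial>M) / l"
    using nonneg_supermartingale.maximal_ineq_infinite[OF W_shifted_nonneg_supermartingale l] q
    by simp
  finally show ?thesis .
qed

lemma V_eventually_less_AE:
  assumes l: "0 < l"
  shows "AE \<omega> in M. \<forall>\<^sub>F k in sequentially. V k \<omega> < l"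
proof -
  define N where "N = {\<omega>\<in>space M. \<forall>m. \<exists>k\<ge>m. l \<le> V k \<omega>}"
  have N_sets: "N \<in> sets M" unfolding N_def by measurable
  have "\<forall>\<^sub>F k in sequentially. q k \<le> 1"
    using q_eventually_le
  proof eventually_elim
    case (elim k)
    then show ?case using mult_pos_pos[OF smono(1) \<gamma>_pos[of k]] by linarith
  qed
  then obtain K where K: "\<And>j. K \<le> j \<Longrightarrow> q j \<le> 1" unfolding eventually_sequentially by blast
  have "\<forall>n\<ge>K. measure M N \<le> (\<integral>\<omega>. W n \<omega> \<partial>M) / l"
    unfolding N_def using measure_V_frequently_ge_le[OF l] K by auto
  moreover have "(\<lambda>n. (\<integral>\<omega>. W n \<omega> \<partial>M) / l) \<longlonglongrightarrow> 0"
    using tendsto_divide_zero[OF expected_W_tendsto_zero] .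
  ultimately have "measure M N \<le> 0" by (intro LIMSEQ_le_const) auto
  then have N_null: "emeasure M N = 0" using measure_nonneg[of M N] by (simp add: emeasure_eq_measure)
  have "{\<omega>\<in>space M. \<not> (\<forall>\<^sub>F k in sequentially. V k \<omega> < l)} = N"
    unfolding N_def not_eventually frequently_sequentially not_less ..
  from AE_iff_measurable[OF N_sets this] N_null show ?thesis by (rule iffD2)
qed

lemma x_tendsto_sol_AE: "AE \<omega> in M. (\<lambda>k. x k \<omega>) \<longlonglongrightarrow> sol"
proof -
  have "AE \<omega> in M. \<forall>j::nat. \<forall>\<^sub>F k in sequentially. V k \<omega> < 1 / Suc j"
    by (subst AE_all_countable) (simp add: V_eventually_less_AE)
  then show ?thesis
  proof eventually_elim
    case (elim \<omega>)
    show ?case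
    proof (rule tendstoI)
      fix r :: real assume r: "0 < r"
      obtain j :: nat where j: "inverse (Suc j) < r\<^sup>2"
        using r reals_Archimedean[of "r\<^sup>2"] by auto
      from elim[rule_format, of j] show "\<forall>\<^sub>F k in sequentially. dist (x k \<omega>) sol < r"
      proof eventually_elim
        case (elim k)
        then have "(norm (x k \<omega> - sol))\<^sup>2 < r\<^sup>2" using j unfolding V_def by (simp add: inverse_eq_divide)
        then show ?case unfolding dist_norm by (rule power2_less_imp_less) (use r in simp)
      qed
    qed
  qed
qed

end

theorem proposition2:
  fixes M :: "'a measure" and S :: "'b measure"
    and X :: "(real ^ 'n) set"
    and F :: "real ^ 'n \<Rightarrow> real ^ 'n"
    and \<Phi> :: "real ^ 'n \<Rightarrow> 'b \<Rightarrow> real ^ 'n"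
    and \<xi> :: "'a \<Rightarrow> 'b" and \<xi>s :: "nat \<Rightarrow> 'a \<Rightarrow> 'b"
    and x0 :: "'a \<Rightarrow> real ^ 'n" and x :: "nat \<Rightarrow> 'a \<Rightarrow> real ^ 'n"
    and w :: "nat \<Rightarrow> 'a \<Rightarrow> real ^ 'n"
    and \<gamma> :: "nat \<Rightarrow> real" and L \<eta> \<nu> c :: real
  assumes P: "prob_space M"
    and X: "X \<noteq> {}" "closed X" "convex X"
    and \<Phi>_meas: "(\<lambda>(y, s). \<Phi> y s) \<in> borel_measurable (borel \<Otimes>\<^sub>M S)"
    and \<xi>_meas: "\<xi> \<in> measurable M S"
    and F_def: "\<And>y. y \<in> X \<Longrightarrow> integrable M (\<lambda>\<omega>. \<Phi> y (\<xi> \<omega>))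
                  \<and> F y = (\<integral>\<omega>. \<Phi> y (\<xi> \<omega>) \<partial>M)"
    and Lip: "L > 0" "\<forall>y\<in>X. \<forall>z\<in>X. norm (F y - F z) \<le> L * norm (y - z)"
    and smono: "\<eta> > 0" "\<forall>y\<in>X. \<forall>z\<in>X. inner (F y - F z) (y - z) \<ge> \<eta> * (norm (y - z))\<^sup>2"
    and \<xi>s_meas: "\<And>k. \<xi>s k \<in> measurable M S"
    and x0_meas: "x0 \<in> borel_measurable M"
    and x0_X: "\<And>\<omega>. \<omega> \<in> space M \<Longrightarrow> x0 \<omega> \<in> X"
    and x0_sq: "integrable M (\<lambda>\<omega>. (norm (x0 \<omega>))\<^sup>2)"
    and indep: "prob_space.indep_set M
                {x0 -` A \<inter> space M | A. A \<in> sets borel}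
                {(\<lambda>\<omega> k. \<xi>s k \<omega>) -` B \<inter> space M | B. B \<in> sets (Pi\<^sub>M UNIV (\<lambda>_. S))}"
    and x_0: "\<And>\<omega>. x 0 \<omega> = x0 \<omega>"
    and x_Suc: "\<And>k \<omega>. x (Suc k) \<omega> =
                   closest_point X (x k \<omega> - \<gamma> k *\<^sub>R (F (x k \<omega>) + w k \<omega>))"
    and w_def: "\<And>k \<omega>. w k \<omega> = \<Phi> (x k \<omega>) (\<xi>s k \<omega>) - F (x k \<omega>)"
    and w_mean: "\<And>k i. AE \<omega> in M. real_cond_exp M (nat_filt M S x0 \<xi>s k) (\<lambda>\<omega>. w k \<omega> $ i) \<omega> = 0"
    and w_var: "\<nu> > 0" "\<And>k. AE \<omega> in M.
                 nn_cond_exp M (nat_filt M S x0 \<xi>s k) (\<lambda>\<omega>. ennreal ((norm (w k \<omega>))\<^sup>2)) \<omega> \<le> ennreal (\<nu>\<^sup>2)"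
    and c: "c > 0"
    and \<gamma>0: "0 < \<gamma> 0" "\<gamma> 0 < 1 / c"
    and \<gamma>_Suc: "\<And>k. \<gamma> (Suc k) = \<gamma> k * (1 - c * \<gamma> k)"
  shows "(\<exists>s. VI_sol X F = {s}) \<and>
         (\<exists>xstar. xstar \<in> borel_measurable M \<and>
            (AE \<omega> in M. xstar \<omega> \<in> VI_sol X F \<and> (\<lambda>k. x k \<omega>) \<longlonglongrightarrow> xstar \<omega>))"
proof -
  interpret projected_stochastic_approximation M S x0 \<xi>s X F \<Phi> x w \<gamma> L \<eta> \<nu> c
    by (rule projected_stochastic_approximation.intro[OF sample_filtration.intro[OF P sample_filtration_axioms.intro]
          projected_stochastic_approximation_axioms.intro]) (fact assms)+
  show ?thesis
  proof (intro conjI exI)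
    show "VI_sol X F = {sol}" by (rule VI_sol_eq)
    show "(\<lambda>_. sol) \<in> borel_measurable M" by simp
    show "AE \<omega> in M. sol \<in> VI_sol X F \<and> (\<lambda>k. x k \<omega>) \<longlonglongrightarrow> sol"
      using x_tendsto_sol_AE by (simp add: VI_sol_eq)
  qed
qed

end
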